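(* Let $\alpha\in(0,\pi/2]$ and define the polynomial $$\begin{aligned} p_1(d)&=-32\sin^6\alpha\,d^{12}+256\sin^6\alpha\,d^{10}-1184\sin^6\alpha\,d^8\\ &\quad-96\sin^3\alpha\big(-40\alpha+9\sin\alpha+20\sin2\alpha+7\sin3\alpha-30\alpha\cos\alpha\big)d^6\\ &\quad+96\sin^3\alpha\big(-160\alpha+99\sin\alpha+80\sin2\alpha+7\sin3\alpha-120\alpha\cos\alpha\big)d^4\\ &\quad+13440(\alpha-\sin\alpha)\sin^5\alpha\,\csc^2\Big(\frac{\alpha}{2}\Big)d^2\\ &\quad-1800\big(6\alpha+8\alpha\cos\alpha-2\sin\alpha(3\cos\alpha+4)\big)^2, \end{aligned}$$ and let $p(x)=p_1(\sqrt{x})$, a polynomial of degree $6$ in $x$. Let $d_{max}=\csc(\alpha/2)\sqrt{5(\alpha\csc\alpha-1)}$. Let $q(x)=x^6-8x^5+37x^4-134x^3+284x^2-280x+100$; its real zeros are $1$ (a double zero) and two further zeros $x_3<x_4$ (numerically $x_3\approx2.1842$, $x_4\approx3.2872$). Then $p$ has at most four positive zeros on $(0,d_{max}^2)$. Moreover, if with $y_0=0$, $y_1=1$, $y_2=x_3$, $y_3=x_4$, $y_4=d_{max}^2$ the values $p(y_0),p(y_1),p(y_2),p(y_3),p(y_4)$ are of alternating signs, then $p$ has precisely four positive zeros.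
   Context: Here $\csc=1/\sin$. *)

theory Defs
  imports Complex_Main
begin

definition csc :: "real \<Rightarrow> real" where
  "csc x = 1 / sin x"

definition p1 :: "real \<Rightarrow> real \<Rightarrow> real" where
  "p1 \<alpha> d =
      - 32 * sin \<alpha> ^ 6 * d ^ 12 + 256 * sin \<alpha> ^ 6 * d ^ 10 - 1184 * sin \<alpha> ^ 6 * d ^ 8
    - 96 * sin \<alpha> ^ 3 * (- 40 * \<alpha> + 9 * sin \<alpha> + 20 * sin (2 * \<alpha>) + 7 * sin (3 * \<alpha>)
                           - 30 * \<alpha> * cos \<alpha>) * d ^ 6
    + 96 * sin \<alpha> ^ 3 * (- 160 * \<alpha> + 99 * sin \<alpha> + 80 * sin (2 * \<alpha>) + 7 * sin (3 * \<alpha>)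
                           - 120 * \<alpha> * cos \<alpha>) * d ^ 4
    + 13440 * (\<alpha> - sin \<alpha>) * sin \<alpha> ^ 5 * (csc (\<alpha> / 2)) ^ 2 * d ^ 2
    - 1800 * (6 * \<alpha> + 8 * \<alpha> * cos \<alpha> - 2 * sin \<alpha> * (3 * cos \<alpha> + 4)) ^ 2"

definition p :: "real \<Rightarrow> real \<Rightarrow> real" where
  "p \<alpha> x = p1 \<alpha> (sqrt x)"

definition dmax :: "real \<Rightarrow> real" where
  "dmax \<alpha> = csc (\<alpha> / 2) * sqrt (5 * (\<alpha> * csc \<alpha> - 1))"

definition q :: "real \<Rightarrow> real" where
  "q x = x ^ 6 - 8 * x ^ 5 + 37 * x ^ 4 - 134 * x ^ 3 + 284 * x ^ 2 - 280 * x + 100"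

end

theory Submission
  imports Defs "HOL-Computational_Algebra.Polynomial" "HOL-Library.Quadratic_Discriminant"
begin

text \<open>For \<open>x \<ge> 0\<close>, \<open>p \<alpha> x\<close> is a sextic polynomial in \<open>x\<close> whose three leading coefficients
  are \<open>sin \<alpha> ^ 6\<close> times \<open>-32, 256, -1184\<close>. Its fourth derivative is therefore a negative
  definite quadratic, and Rolle's theorem, applied four times, bounds the number of real zeros
  of \<open>p \<alpha>\<close> by four. The zeros \<open>x\<^sub>3, x\<^sub>4\<close> of \<open>q\<close> lie in \<open>[2, 10/3)\<close>, while
  \<open>d\<^sub>m\<^sub>a\<^sub>x\<^sup>2 \<ge> 10/3\<close>; so \<open>0 < 1 < x\<^sub>3 < x\<^sub>4 < d\<^sub>m\<^sub>a\<^sub>x\<^sup>2\<close>, and a sign change of \<open>p \<alpha>\<close>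
  on each of the four intervals yields four zeros by the intermediate value theorem.\<close>

lemma card_zeros_le_Suc_card_deriv_zeros:
  fixes f f' :: "real \<Rightarrow> real"
  assumes der: "\<And>x. (f has_real_derivative f' x) (at x)"
    and T: "finite T" "T \<subseteq> {x. f x = 0}"
    and fin': "finite {x. f' x = 0}"
  shows "card T \<le> Suc (card {x. f' x = 0})"
proof (cases "T = {}")
  case False
  define T' where "T' = T - {Max T}"
  define nxt where "nxt t = Min {u \<in> T. t < u}" for t
  have nxt: "t < nxt t" "nxt t \<in> T" "\<And>u. u \<in> T \<Longrightarrow> t < u \<Longrightarrow> nxt t \<le> u" if "t \<in> T'" for t
  proof -
    have "Max T \<in> {u \<in> T. t < u}"
      using that T(1) False by (auto simp: T'_def order.not_eq_order_implies_strict)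
    then have "{u \<in> T. t < u} \<noteq> {}" "finite {u \<in> T. t < u}" using T(1) by auto
    then show "t < nxt t" "nxt t \<in> T" "\<And>u. u \<in> T \<Longrightarrow> t < u \<Longrightarrow> nxt t \<le> u"
      unfolding nxt_def using Min_in by fastforce+
  qed
  have "\<exists>y. t < y \<and> y < nxt t \<and> f' y = 0" if t: "t \<in> T'" for t
  proof -
    have "t \<in> T" using t by (simp add: T'_def)
    then have "f t = 0" "f (nxt t) = 0" using nxt(2)[OF t] T(2) by blast+
    then have "f t = f (nxt t)" by simp
    moreover have "continuous_on {t..nxt t} f"
      using der by (meson DERIV_isCont continuous_at_imp_continuous_on)
    moreover have "f differentiable (at x)" for x
      using der real_differentiable_def by blast
    ultimately obtain y where "t < y" "y < nxt t" "DERIV f y :> 0"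
      using Rolle[OF nxt(1)[OF t]] by blast
    then show ?thesis using DERIV_unique der by blast
  qed
  then obtain y where y: "\<And>t. t \<in> T' \<Longrightarrow> t < y t \<and> y t < nxt t \<and> f' (y t) = 0"
    by metis
  have "strict_mono_on T' y"
  proof (rule strict_mono_onI)
    fix s t assume "s \<in> T'" "t \<in> T'" "s < t"
    then have "y s < nxt s" "nxt s \<le> t" "t < y t" using y nxt(3) by (auto simp: T'_def)
    then show "y s < y t" by linarith
  qed
  then have "card T' \<le> card {x. f' x = 0}"
    using y fin' by (intro card_inj_on_le strict_mono_on_imp_inj_on) auto
  moreover have "card T = Suc (card T')"
    using T(1) False by (simp add: T'_def card_gt_0_iff)
  ultimately show ?thesis by simp
qed simp

lemma finite_zeros_card_le_Suc_card_deriv_zeros: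
  fixes f f' :: "real \<Rightarrow> real"
  assumes der: "\<And>x. (f has_real_derivative f' x) (at x)"
    and fin': "finite {x. f' x = 0}"
  shows "finite {x. f x = 0} \<and> card {x. f x = 0} \<le> Suc (card {x. f' x = 0})"
proof -
  have "finite {x. f x = 0}"
  proof (rule ccontr)
    assume "infinite {x. f x = 0}"
    then obtain T where "finite T" "card T = Suc (Suc (card {x. f' x = 0}))" "T \<subseteq> {x. f x = 0}"
      using infinite_arbitrarily_large by blast
    then show False using card_zeros_le_Suc_card_deriv_zeros[OF der _ _ fin'] by fastforce
  qed
  then show ?thesis using card_zeros_le_Suc_card_deriv_zeros[OF der _ _ fin'] by blast
qed

lemma finite_card_poly_roots_le_if_higher_pderiv_no_roots:
  fixes P :: "real poly"
  assumes "\<And>x. poly ((pderiv ^^ k) P) x \<noteq> 0"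
  shows "finite {x. poly P x = 0} \<and> card {x. poly P x = 0} \<le> k"
  using assms
proof (induction k arbitrary: P)
  case (Suc k)
  have "(pderiv ^^ Suc k) P = (pderiv ^^ k) (pderiv P)"
    by (simp only: funpow_Suc_right o_apply)
  then have IH: "finite {x. poly (pderiv P) x = 0} \<and> card {x. poly (pderiv P) x = 0} \<le> k"
    using Suc.IH[of "pderiv P"] Suc.prems by metis
  then have "finite {x. poly P x = 0} \<and> card {x. poly P x = 0} \<le> Suc (card {x. poly (pderiv P) x = 0})"
    by (intro finite_zeros_card_le_Suc_card_deriv_zeros poly_DERIV) blast
  with IH show ?case by auto
qed simp

lemma finite_card_roots_sextic_le_4:
  fixes a0 a1 a2 a3 a4 a5 a6 :: real
  assumes "5 * a5\<^sup>2 < 12 * a4 * a6"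
  shows "finite {x. poly [:a0, a1, a2, a3, a4, a5, a6:] x = 0}
    \<and> card {x. poly [:a0, a1, a2, a3, a4, a5, a6:] x = 0} \<le> 4"
proof (rule finite_card_poly_roots_le_if_higher_pderiv_no_roots)
  fix x
  have "a6 \<noteq> 0" using assms by (auto simp: not_less[symmetric])
  moreover have "discrim (360 * a6) (120 * a5) (24 * a4) < 0"
    using assms by (simp add: discrim_def power2_eq_square)
  ultimately have "360 * a6 * x\<^sup>2 + 120 * a5 * x + 24 * a4 \<noteq> 0"
    by (intro discriminant_negative) auto
  moreover have "(pderiv ^^ 4) [:a0, a1, a2, a3, a4, a5, a6:] = [:24 * a4, 120 * a5, 360 * a6:]"
    by (simp add: numeral_eq_Suc pderiv_pCons)
  ultimately show "poly ((pderiv ^^ 4) [:a0, a1, a2, a3, a4, a5, a6:]) x \<noteq> 0"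
    by (simp add: algebra_simps power2_eq_square)
qed

definition p_poly :: "real \<Rightarrow> real poly" where
  "p_poly \<alpha> =
    [: - 1800 * (6 * \<alpha> + 8 * \<alpha> * cos \<alpha> - 2 * sin \<alpha> * (3 * cos \<alpha> + 4)) ^ 2,
       13440 * (\<alpha> - sin \<alpha>) * sin \<alpha> ^ 5 * (csc (\<alpha> / 2)) ^ 2,
       96 * sin \<alpha> ^ 3 * (- 160 * \<alpha> + 99 * sin \<alpha> + 80 * sin (2 * \<alpha>) + 7 * sin (3 * \<alpha>)
                          - 120 * \<alpha> * cos \<alpha>),
       - 96 * sin \<alpha> ^ 3 * (- 40 * \<alpha> + 9 * sin \<alpha> + 20 * sin (2 * \<alpha>) + 7 * sin (3 * \<alpha>)
                            - 30 * \<alpha> * cos \<alpha>),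
       - 1184 * sin \<alpha> ^ 6, 256 * sin \<alpha> ^ 6, - 32 * sin \<alpha> ^ 6 :]"

lemma p1_eq_poly_p_poly: "p1 \<alpha> d = poly (p_poly \<alpha>) (d\<^sup>2)"
  unfolding p1_def p_poly_def by (simp add: algebra_simps flip: power_mult)

lemma p_eq_poly_p_poly: "0 \<le> x \<Longrightarrow> p \<alpha> x = poly (p_poly \<alpha>) x"
  by (simp add: p_def p1_eq_poly_p_poly)

lemma finite_card_roots_p_poly_le_4:
  assumes "sin \<alpha> \<noteq> 0"
  shows "finite {x. poly (p_poly \<alpha>) x = 0} \<and> card {x. poly (p_poly \<alpha>) x = 0} \<le> 4"
  unfolding p_poly_def
  by (rule finite_card_roots_sextic_le_4) (use assms in \<open>simp add: power2_eq_square\<close>)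

lemma continuous_on_p: "continuous_on S (p \<alpha>)"
  unfolding p_def p1_def by (intro continuous_intros)

lemma q_zero_bounds:
  assumes "q x = 0" "x \<noteq> 1"
  shows "2 \<le> x \<and> x < 10 / 3"
proof -
  have "q x = (x - 1)\<^sup>2 * (x\<^sup>2 * (x - 3)\<^sup>2 + 5 * (3 * x - 10) * (x - 2))"
    unfolding q_def by (simp add: power2_eq_square power3_eq_cube power4_eq_xxxx algebra_simps
        eval_nat_numeral)
  then have r: "x\<^sup>2 * (x - 3)\<^sup>2 + 5 * (3 * x - 10) * (x - 2) = 0" using assms by simp
  have "\<not> x < 2"
  proof
    assume "x < 2"
    then have "0 < 5 * (3 * x - 10) * (x - 2)" by (simp add: mult_neg_neg)
    moreover have "0 \<le> x\<^sup>2 * (x - 3)\<^sup>2" by simp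
    ultimately show False using r by linarith
  qed
  moreover have "\<not> 10 / 3 \<le> x"
  proof
    assume "10 / 3 \<le> x"
    then have "0 \<le> 5 * (3 * x - 10) * (x - 2)" "0 < x\<^sup>2 * (x - 3)\<^sup>2" by simp_all
    then show False using r by linarith
  qed
  ultimately show ?thesis by simp
qed

lemma four_sin_sub_sin_mult_cos_le:
  fixes t :: real
  assumes "0 \<le> t"
  shows "4 * sin t - sin t * cos t \<le> 3 * t"
proof -
  define g where "g t = 3 * t - 4 * sin t + sin t * cos t" for t :: real
  have "(g has_real_derivative 2 * (1 - cos x)\<^sup>2) (at x)" for x
  proof -
    have "(g has_real_derivative 3 - 4 * cos x + (cos x * cos x - sin x * sin x)) (at x)"
      unfolding g_def by (auto intro!: derivative_eq_intros)
    moreover have "3 - 4 * cos x + (cos x * cos x - sin x * sin x) = 2 * (1 - cos x)\<^sup>2"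
      using sin_cos_squared_add[of x] by (simp add: power2_eq_square algebra_simps)
    ultimately show ?thesis by simp
  qed
  then have "g 0 \<le> g t"
    using assms by (metis DERIV_nonneg_imp_nondecreasing zero_le_mult_iff zero_le_numeral zero_le_power2)
  then show ?thesis by (simp add: g_def)
qed

lemma dmax_sq_eq:
  assumes "0 < \<alpha>" "\<alpha> < pi"
  shows "(dmax \<alpha>)\<^sup>2 = 10 * (\<alpha> - sin \<alpha>) / (sin \<alpha> * (1 - cos \<alpha>))"
proof -
  have sin: "0 < sin \<alpha>" using assms by (simp add: sin_gt_zero)
  have cos: "cos \<alpha> < 1" using assms cos_monotone_0_pi[of 0 \<alpha>] by simp
  have sin_half_sq: "(sin (\<alpha> / 2))\<^sup>2 = (1 - cos \<alpha>) / 2"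
    using cos_double_sin[of "\<alpha> / 2"] by simp
  have "0 \<le> \<alpha> * csc \<alpha> - 1" using sin assms sin_x_le_x[of \<alpha>] by (simp add: csc_def field_simps)
  then have "(dmax \<alpha>)\<^sup>2 = 5 * (\<alpha> / sin \<alpha> - 1) / (sin (\<alpha> / 2))\<^sup>2"
    by (simp add: dmax_def csc_def power_mult_distrib power_divide)
  also have "\<dots> = 5 * (\<alpha> / sin \<alpha> - 1) / ((1 - cos \<alpha>) / 2)"
    by (simp only: sin_half_sq)
  also have "\<dots> = 10 * (\<alpha> - sin \<alpha>) / (sin \<alpha> * (1 - cos \<alpha>))"
    using sin cos by (simp add: field_simps)
  finally show ?thesis .
qed

lemma dmax_sq_ge:
  assumes "0 < \<alpha>" "\<alpha> < pi"
  shows "10 / 3 \<le> (dmax \<alpha>)\<^sup>2"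
proof -
  have "0 < sin \<alpha>" using assms by (simp add: sin_gt_zero)
  moreover have "cos \<alpha> < 1" using assms cos_monotone_0_pi[of 0 \<alpha>] by simp
  moreover have "4 * sin \<alpha> - sin \<alpha> * cos \<alpha> \<le> 3 * \<alpha>"
    using assms by (intro four_sin_sub_sin_mult_cos_le) simp
  ultimately show ?thesis using assms by (simp add: dmax_sq_eq field_simps)
qed

lemma IVT_sign_change:
  fixes f :: "real \<Rightarrow> real"
  assumes "a < b" "continuous_on {a..b} f" "f a * f b < 0"
  obtains z where "a < z" "z < b" "f z = 0"
proof -
  have "f a < 0 \<and> 0 < f b \<or> 0 < f a \<and> f b < 0" using assms(3) by (auto simp: mult_less_0_iff)
  then obtain z where "a \<le> z" "z \<le> b" "f z = 0"
    using IVT'[of f a 0 b] IVT2'[of f b 0 a] assms(1,2) by force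
  moreover have "z \<noteq> a" "z \<noteq> b" using \<open>f z = 0\<close> assms(3) by auto
  ultimately show ?thesis using that by force
qed

lemma card_zeros_ge_sign_changes:
  fixes f :: "real \<Rightarrow> real" and xs :: "real list"
  assumes sorted: "sorted_wrt (<) xs" and cont: "continuous_on {hd xs..last xs} f"
    and sign: "\<forall>i < length xs - 1. f (xs ! i) * f (xs ! Suc i) < 0"
    and fin: "finite {x. hd xs < x \<and> x < last xs \<and> f x = 0}"
  shows "length xs - 1 \<le> card {x. hd xs < x \<and> x < last xs \<and> f x = 0}"
proof (cases "xs = []")
  case False
  have le: "xs ! i \<le> xs ! j" if "i \<le> j" "j < length xs" for i j
    using sorted_wrt_nth_less[OF sorted] that by (metis le_less)
  have bounds: "hd xs \<le> xs ! i" "xs ! i \<le> last xs" if "i < length xs" for i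
    using le[of 0 i] le[of i "length xs - 1"] that False by (simp_all add: hd_conv_nth last_conv_nth)
  have "\<exists>z. xs ! i < z \<and> z < xs ! Suc i \<and> f z = 0" if "i < length xs - 1" for i
  proof -
    have "xs ! i < xs ! Suc i" using sorted_wrt_nth_less[OF sorted] that by simp
    moreover have "continuous_on {xs ! i..xs ! Suc i} f"
      using that bounds[of i] bounds[of "Suc i"] by (intro continuous_on_subset[OF cont]) auto
    moreover have "f (xs ! i) * f (xs ! Suc i) < 0" using sign that by blast
    ultimately show ?thesis by (meson IVT_sign_change)
  qed
  then obtain z where z: "\<And>i. i < length xs - 1 \<Longrightarrow> xs ! i < z i \<and> z i < xs ! Suc i \<and> f (z i) = 0"
    by metis
  have "strict_mono_on {..<length xs - 1} z"
  proof (rule strict_mono_onI)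
    fix i j assume "i \<in> {..<length xs - 1}" "j \<in> {..<length xs - 1}" "i < j"
    then have "z i < xs ! Suc i" "xs ! Suc i \<le> xs ! j" "xs ! j < z j" using z le by auto
    then show "z i < z j" by linarith
  qed
  moreover have "z ` {..<length xs - 1} \<subseteq> {x. hd xs < x \<and> x < last xs \<and> f x = 0}"
  proof -
    have "hd xs < z i \<and> z i < last xs \<and> f (z i) = 0" if "i < length xs - 1" for i
    proof -
      have "hd xs \<le> xs ! i" "xs ! Suc i \<le> last xs" using bounds that by auto
      then show ?thesis using z[OF that] by auto
    qed
    then show ?thesis by auto
  qed
  ultimately have "card {..<length xs - 1} \<le> card {x. hd xs < x \<and> x < last xs \<and> f x = 0}"
    using fin by (intro card_inj_on_le strict_mono_on_imp_inj_on)
  then show ?thesis by simp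
qed simp

theorem lemma5:
  fixes \<alpha> x3 x4 :: real
  assumes "0 < \<alpha>" and "\<alpha> \<le> pi / 2"
    and "{x. q x = 0} = {1, x3, x4}" and "x3 \<noteq> 1" and "x4 \<noteq> 1" and "x3 < x4"
  shows "finite {x. 0 < x \<and> x < (dmax \<alpha>)\<^sup>2 \<and> p \<alpha> x = 0}
         \<and> card {x. 0 < x \<and> x < (dmax \<alpha>)\<^sup>2 \<and> p \<alpha> x = 0} \<le> 4
         \<and> ((\<forall>i<4. p \<alpha> ([0, 1, x3, x4, (dmax \<alpha>)\<^sup>2] ! i)
                     * p \<alpha> ([0, 1, x3, x4, (dmax \<alpha>)\<^sup>2] ! Suc i) < 0)
            \<longrightarrow> card {x. 0 < x \<and> x < (dmax \<alpha>)\<^sup>2 \<and> p \<alpha> x = 0} = 4)"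
proof -
  define D where "D = (dmax \<alpha>)\<^sup>2"
  define Z where "Z = {x. 0 < x \<and> x < D \<and> p \<alpha> x = 0}"
  have \<alpha>: "\<alpha> < pi" using assms(2) pi_gt_zero by linarith
  have sub: "Z \<subseteq> {x. poly (p_poly \<alpha>) x = 0}" by (auto simp: Z_def p_eq_poly_p_poly)
  have roots: "finite {x. poly (p_poly \<alpha>) x = 0} \<and> card {x. poly (p_poly \<alpha>) x = 0} \<le> 4"
    using sin_gt_zero[OF assms(1) \<alpha>] by (intro finite_card_roots_p_poly_le_4) simp
  have fin: "finite Z" using sub roots finite_subset by blast
  have le4: "card Z \<le> 4" using sub roots card_mono order_trans by blast
  have "card Z = 4" if alt: "\<forall>i<4. p \<alpha> ([0, 1, x3, x4, D] ! i) * p \<alpha> ([0, 1, x3, x4, D] ! Suc i) < 0"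
  proof -
    have "2 \<le> x3" "x4 < 10 / 3" using q_zero_bounds assms(3-5) by blast+
    moreover have "10 / 3 \<le> D" unfolding D_def using dmax_sq_ge assms(1) \<alpha> .
    ultimately have "sorted_wrt (<) [0, 1, x3, x4, D]" using assms(6) by simp
    then have "4 \<le> card Z"
      using card_zeros_ge_sign_changes[of "[0, 1, x3, x4, D]" "p \<alpha>"] alt fin continuous_on_p
      by (simp add: Z_def)
    with le4 show ?thesis by simp
  qed
  with fin le4 show ?thesis unfolding Z_def D_def by blast
qed

end
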